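(* Let $S$ be a Hausdorff countably compact topological semigroup which is algebraically a primitive inverse semigroup, $S=\sum_{i\in\mathscr I}B_{\lambda_i}(G_i)$. Then the family of all sets $S\setminus\big((G_{i_1})_{\alpha_1,\beta_1}\cup\dots\cup(G_{i_k})_{\alpha_k,\beta_k}\big)$, where $k\in\mathbb N$, $i_1,\dots,i_k\in\mathscr I$ and $\alpha_j,\beta_j\in\lambda_{i_j}$, is a base of the topology of $S$ at zero.
   Context: A topological semigroup is a Hausdorff space with jointly continuous associative operation. For a group $G$ and cardinal $\lambda\ge1$, $B_\lambda(G)=(\lambda\times G\times\lambda)\cup\{0\}$ with $(\alpha,a,\beta)(\gamma,b,\delta)=(\alpha,ab,\delta)$ if $\beta=\gamma$ and $0$ otherwise. The orthogonal sum of semigroups $T_\iota$ with zeros is $\{0\}\cup\bigcup_\iota(T_\iota\setminus\{0_\iota\})$ with products computed in $T_\iota$ when both factors lie in the same $T_\iota$ and the product is non-zero, and $0$ otherwise. Primitive inverse semigroups are exactly orthogonal sums $\sum_{i\in\mathscr I}B_{\lambda_i}(G_i)$; we identify $B_{\lambda_i}(G_i)$ with a subsemigroup of $S$ and write $(G_i)_{\alpha,\beta}=\{(\alpha,g,\beta):g\in G_i\}$. *)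

theory Defs
  imports "HOL-Analysis.Analysis" "HOL-Algebra.Group"
begin

text \<open>Orthogonal sum of Brandt semigroups B_{Lambda i}(G i), i in I.
  The zero is None; the element (alpha, g, beta) of B_{Lambda i}(G i) is
  Some (i, alpha, g, beta).\<close>

definition osum_carrier ::
  "'i set \<Rightarrow> ('i \<Rightarrow> 'l set) \<Rightarrow> ('i \<Rightarrow> 'g monoid) \<Rightarrow> ('i \<times> 'l \<times> 'g \<times> 'l) option set" where
  "osum_carrier I Lam G =
     insert None {Some (i, a, g, b) | i a g b. i \<in> I \<and> a \<in> Lam i \<and> b \<in> Lam i \<and> g \<in> carrier (G i)}"

fun osum_mult ::
  "('i \<Rightarrow> 'g monoid) \<Rightarrow> ('i \<times> 'l \<times> 'g \<times> 'l) option \<Rightarrow> ('i \<times> 'l \<times> 'g \<times> 'l) option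
     \<Rightarrow> ('i \<times> 'l \<times> 'g \<times> 'l) option" where
  "osum_mult G (Some (i, a, g, b)) (Some (j, c, h, d)) =
     (if i = j \<and> b = c then Some (i, a, g \<otimes>\<^bsub>G i\<^esub> h, d) else None)"
| "osum_mult G _ _ = None"

definition cell :: "('i \<Rightarrow> 'g monoid) \<Rightarrow> 'i \<Rightarrow> 'l \<Rightarrow> 'l \<Rightarrow> ('i \<times> 'l \<times> 'g \<times> 'l) option set" where
  "cell G i a b = {Some (i, a, g, b) | g. g \<in> carrier (G i)}"

definition countably_compact_space :: "'a topology \<Rightarrow> bool" where
  "countably_compact_space X \<longleftrightarrow>
    (\<forall>\<U>. countable \<U> \<longrightarrow> (\<forall>U\<in>\<U>. openin X U) \<longrightarrow> topspace X \<subseteq> \<Union>\<U>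
       \<longrightarrow> (\<exists>\<V>\<subseteq>\<U>. finite \<V> \<and> topspace X \<subseteq> \<Union>\<V>))"

definition base_at :: "'a topology \<Rightarrow> 'a \<Rightarrow> 'a set set \<Rightarrow> bool" where
  "base_at X x \<B> \<longleftrightarrow>
     (\<forall>B\<in>\<B>. openin X B \<and> x \<in> B) \<and>
     (\<forall>U. openin X U \<and> x \<in> U \<longrightarrow> (\<exists>B\<in>\<B>. B \<subseteq> U))"

end

theory Submission
  imports Defs
begin

text \<open>The cells \<open>(G\<^sub>i)\<^sub>\<alpha>\<^sub>,\<^sub>\<beta>\<close> are open, since \<open>(G\<^sub>i)\<^sub>\<alpha>\<^sub>,\<^sub>\<beta> = {y. e\<^sub>\<alpha> y e\<^sub>\<beta> \<noteq> 0}\<close>, and pairwise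
  disjoint. The heart of the proof is that \<open>0\<close> is not adherent to any cell; by a translation it
  suffices to show this for the subgroup \<open>H = (G\<^sub>i)\<^sub>\<alpha>\<^sub>,\<^sub>\<alpha>\<close>. If \<open>0\<close> were adherent to \<open>H\<close>, continuity of
  the multiplication at \<open>(0, 0)\<close> and \<open>(0, e)\<close> would produce, from partial products of elements of
  \<open>H\<close> approaching \<open>0\<close>, an infinite locally finite subset of \<open>H\<close>, which a countably compact space
  cannot contain. Hence every cell is closed and the sets in question are open neighbourhoods
  of \<open>0\<close>. Conversely, a neighbourhood \<open>U\<close> of \<open>0\<close> contains all but finitely many cells: one point
  outside \<open>U\<close> from each remaining cell again forms a locally finite set.\<close>

lemma countably_compact_locally_finite_imp_finite:
  assumes cc: "countably_compact_space X" and t1: "t1_space X"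
    and S: "S \<subseteq> topspace X"
    and loc: "\<And>x. x \<in> topspace X \<Longrightarrow> \<exists>U. openin X U \<and> x \<in> U \<and> finite (S \<inter> U)"
  shows "finite S"
proof (rule ccontr)
  \<comment> \<open>A countable infinite \<open>T \<subseteq> S\<close> has only closed subsets, so the complements of \<open>T\<close> and of
    the sets \<open>T - {t}\<close> form a countable open cover without a finite subcover.\<close>
  assume "infinite S"
  then obtain T where T: "T \<subseteq> S" "countable T" "infinite T"
    using infinite_countable_subset' by blast
  have closed: "closedin X R" if "R \<subseteq> T" for R
  proof -
    have "X derived_set_of R = {}"
    proof -
      have "\<exists>U. x \<in> U \<and> openin X U \<and> finite (R \<inter> U)" if "x \<in> topspace X" for x
        using loc[OF that] \<open>R \<subseteq> T\<close> T(1) by (meson Int_mono finite_subset order_refl order_trans)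
      then show ?thesis
        using t1 by (auto simp: t1_space_derived_set_of_infinite_openin)
    qed
    then show ?thesis
      using that T(1) S by (simp add: closedin_contains_derived_set)
  qed
  define \<U> where "\<U> = insert (topspace X - T) ((\<lambda>t. topspace X - (T - {t})) ` T)"
  have "countable \<U>" "\<forall>U\<in>\<U>. openin X U" "topspace X \<subseteq> \<Union>\<U>"
    using T(2) closed by (auto simp: \<U>_def)
  then obtain \<V> where \<V>: "\<V> \<subseteq> \<U>" "finite \<V>" "topspace X \<subseteq> \<Union>\<V>"
    using cc by (auto simp: countably_compact_space_def)
  have "\<V> - {topspace X - T} \<subseteq> (\<lambda>t. topspace X - (T - {t})) ` T"
    using \<V>(1) unfolding \<U>_def by blast
  then obtain F where F: "F \<subseteq> T" "finite F" "\<V> - {topspace X - T} = (\<lambda>t. topspace X - (T - {t})) ` F"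
    using finite_subset_image[OF finite_Diff[OF \<V>(2)]] by metis
  obtain t where t: "t \<in> T" "t \<notin> F"
    using T(3) F(2) by (metis finite_subset subsetI)
  then obtain V where V: "V \<in> \<V>" "t \<in> V"
    using \<V>(3) T(1) S by blast
  then have "V \<in> (\<lambda>t. topspace X - (T - {t})) ` F"
    using F(3) t(1) by blast
  then show False
    using V(2) t by auto
qed

fun seg_prod :: "('g, 'b) monoid_scheme \<Rightarrow> (nat \<Rightarrow> 'g) \<Rightarrow> nat \<Rightarrow> nat \<Rightarrow> 'g" where
  "seg_prod M g m 0 = \<one>\<^bsub>M\<^esub>"
| "seg_prod M g m (Suc l) = g m \<otimes>\<^bsub>M\<^esub> seg_prod M g (Suc m) l"

lemma (in monoid) seg_prod_closed:
  "(\<And>k. g k \<in> carrier G) \<Longrightarrow> seg_prod G g m l \<in> carrier G"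
  by (induction l arbitrary: m) auto

lemma (in monoid) seg_prod_add:
  assumes g: "\<And>k. g k \<in> carrier G"
  shows "seg_prod G g m (l + l') = seg_prod G g m l \<otimes> seg_prod G g (m + l) l'"
proof (induction l arbitrary: m)
  case 0
  show ?case
    using seg_prod_closed[OF g] by simp
next
  case (Suc l)
  then show ?case
    using g seg_prod_closed[OF g] by (simp add: m_assoc)
qed

lemma continuous_map_binop_nbhds:
  assumes cont: "continuous_map (prod_topology X X) X (\<lambda>(x, y). f x y)"
    and "x \<in> topspace X" "y \<in> topspace X" "openin X W" "f x y \<in> W"
  obtains A B where "openin X A" "openin X B" "x \<in> A" "y \<in> B"
    "\<And>u v. u \<in> A \<Longrightarrow> v \<in> B \<Longrightarrow> f u v \<in> W"
proof -
  let ?P = "{z \<in> topspace (prod_topology X X). (\<lambda>(x, y). f x y) z \<in> W}"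
  have P: "openin (prod_topology X X) ?P"
    using openin_continuous_map_preimage[OF cont \<open>openin X W\<close>] .
  have xy: "(x, y) \<in> ?P"
    using assms by simp
  obtain A B where AB: "openin X A" "openin X B" "x \<in> A" "y \<in> B" "A \<times> B \<subseteq> ?P"
    using P[unfolded openin_prod_topology_alt, rule_format, OF xy] by blast
  have "f u v \<in> W" if "u \<in> A" "v \<in> B" for u v
    using AB(5) that by auto
  then show thesis
    by (rule that[OF AB(1-4)])
qed

lemma continuous_map_translations:
  assumes cont: "continuous_map (prod_topology X X) X (\<lambda>(x, y). f x y)" and t: "t \<in> topspace X"
  shows "continuous_map X X (f t)" and "continuous_map X X (\<lambda>y. f y t)"
proof -
  have "continuous_map X (prod_topology X X) (\<lambda>y. (t, y))"
    and "continuous_map X (prod_topology X X) (\<lambda>y. (y, t))"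
    using t continuous_map_id by (simp_all add: continuous_map_paired id_def)
  from this[THEN continuous_map_compose, OF cont]
  show "continuous_map X X (f t)" and "continuous_map X X (\<lambda>y. f y t)"
    by (simp_all add: o_def)
qed

lemma idempotent_nbhd_chain:
  assumes cont: "continuous_map (prod_topology X X) X (\<lambda>(x, y). f x y)"
    and z: "z \<in> topspace X" "f z z = z" and W: "openin X W" "z \<in> W"
  obtains B where "\<And>k. openin X (B k)" "\<And>k. z \<in> B k" "B 0 = W" "\<And>k. B (Suc k) \<subseteq> B k"
    "\<And>k u v. u \<in> B (Suc k) \<Longrightarrow> v \<in> B (Suc k) \<Longrightarrow> f u v \<in> B k"
proof -
  have "\<exists>C. openin X C \<and> z \<in> C \<and> C \<subseteq> S \<and> (\<forall>u\<in>C. \<forall>v\<in>C. f u v \<in> S)"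
    if S: "openin X S" "z \<in> S" for S
  proof -
    obtain A B where "openin X A" "openin X B" "z \<in> A" "z \<in> B" "\<And>u v. u \<in> A \<Longrightarrow> v \<in> B \<Longrightarrow> f u v \<in> S"
      using continuous_map_binop_nbhds[OF cont z(1) z(1) S(1)] z(2) S(2) by metis
    then show ?thesis
      using S by (intro exI[of _ "A \<inter> B \<inter> S"]) auto
  qed
  then obtain step where step: "\<And>S. openin X S \<Longrightarrow> z \<in> S \<Longrightarrow>
      openin X (step S) \<and> z \<in> step S \<and> step S \<subseteq> S \<and> (\<forall>u\<in>step S. \<forall>v\<in>step S. f u v \<in> S)"
    by metis
  define B where "B k = (step ^^ k) W" for k
  have B: "openin X (B k) \<and> z \<in> B k" for k
    by (induction k) (simp_all add: B_def W step)
  show thesis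
  proof (rule that)
    show "openin X (B k)" "z \<in> B k" for k
      using B by simp_all
    show "B 0 = W"
      by (simp add: B_def)
    show "B (Suc k) \<subseteq> B k" "u \<in> B (Suc k) \<Longrightarrow> v \<in> B (Suc k) \<Longrightarrow> f u v \<in> B k" for k u v
      using step[OF B[of k, THEN conjunct1] B[of k, THEN conjunct2]] by (simp_all add: B_def)
  qed
qed

text \<open>Take partial products \<open>p\<^sub>n = g\<^sub>0 \<cdots> g\<^sub>n\<close> with \<open>\<phi> g\<^sub>k \<in> B (Suc k)\<close> for a neighbourhood chain \<open>B\<close>
  as above; then \<open>p\<^sub>m\<inverse> p\<^sub>n = g\<^sub>m\<^sub>+\<^sub>1 \<cdots> g\<^sub>n\<close>.\<close>
lemma (in group) idempotent_adherent_group_image_seq: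
  assumes cont: "continuous_map (prod_topology X X) X (\<lambda>(x, y). f x y)"
    and hom: "\<And>g h. g \<in> carrier G \<Longrightarrow> h \<in> carrier G \<Longrightarrow> f (\<phi> g) (\<phi> h) = \<phi> (g \<otimes> h)"
    and z: "z \<in> topspace X" "f z z = z"
    and adh: "\<And>U. openin X U \<Longrightarrow> z \<in> U \<Longrightarrow> \<exists>g\<in>carrier G. \<phi> g \<in> U"
    and W: "openin X W" "z \<in> W"
  obtains p :: "nat \<Rightarrow> 'a" where "\<And>n. p n \<in> carrier G" "\<And>n. \<phi> (p n) \<in> W"
    "\<And>m n. m < n \<Longrightarrow> \<phi> (inv (p m) \<otimes> p n) \<in> W"
proof -
  obtain B where B: "\<And>k. openin X (B k)" "\<And>k. z \<in> B k" "B 0 = W" "\<And>k. B (Suc k) \<subseteq> B k"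
    "\<And>k u v. u \<in> B (Suc k) \<Longrightarrow> v \<in> B (Suc k) \<Longrightarrow> f u v \<in> B k"
    using idempotent_nbhd_chain[OF cont z W] by metis
  have "\<exists>g. g \<in> carrier G \<and> \<phi> g \<in> B (Suc k)" for k
    using adh B(1,2) by blast
  then obtain g where g: "\<And>k. g k \<in> carrier G" "\<And>k. \<phi> (g k) \<in> B (Suc k)"
    by metis
  have B_W: "B k \<subseteq> W" for k
    by (induction k) (use B(3,4) in auto)
  have seg_prod_in: "\<phi> (seg_prod G g m (Suc l)) \<in> B m" for m l
  proof (induction l arbitrary: m)
    case 0
    show ?case
      using g B(4) by auto
  next
    case (Suc l)
    have "f (\<phi> (g m)) (\<phi> (seg_prod G g (Suc m) (Suc l))) \<in> B m"
      using B(5) g(2) Suc.IH by blast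
    then show ?case
      using hom g(1) seg_prod_closed by simp
  qed
  define p where "p n = seg_prod G g 0 (Suc n)" for n
  have p_carrier: "p n \<in> carrier G" for n
    using g(1) seg_prod_closed by (simp add: p_def)
  have quot: "\<phi> (inv (p m) \<otimes> p n) \<in> W" if "m < n" for m n
  proof -
    have "p n = p m \<otimes> seg_prod G g (Suc m) (Suc (n - Suc m))"
      using seg_prod_add[OF g(1), where m = 0 and l = "Suc m" and l' = "Suc (n - Suc m)"] that
      by (simp add: p_def)
    then have "inv (p m) \<otimes> p n = seg_prod G g (Suc m) (Suc (n - Suc m))"
      using p_carrier g(1) seg_prod_closed by (simp add: m_assoc[symmetric])
    then show ?thesis
      using seg_prod_in B_W by auto
  qed
  show thesis
  proof (rule that[of p])
    show "p n \<in> carrier G" for n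
      by (rule p_carrier)
    show "\<phi> (p n) \<in> W" for n
      using seg_prod_in[of 0 n] B(3) by (simp add: p_def)
  qed (fact quot)
qed

lemma (in group) finite_if_separated_translates:
  assumes cc: "countably_compact_space X" and t1: "t1_space X"
    and cont: "continuous_map (prod_topology X X) X (\<lambda>(x, y). f x y)"
    and hom: "\<And>g h. g \<in> carrier G \<Longrightarrow> h \<in> carrier G \<Longrightarrow> f (\<phi> g) (\<phi> h) = \<phi> (g \<otimes> h)"
    and inj: "inj_on \<phi> (carrier G)" and closed: "closedin X (insert z (\<phi> ` carrier G))"
    and S: "S \<subseteq> carrier G" and U: "openin X U" "z \<in> U" "\<phi> ` S \<inter> U = {}"
    and N: "openin X N" "\<phi> \<one> \<in> N"
    and sep: "\<And>s t y. s \<in> S \<Longrightarrow> t \<in> S \<Longrightarrow> y \<in> carrier G \<Longrightarrow>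
      \<phi> (s \<otimes> y) \<in> N \<Longrightarrow> \<phi> (t \<otimes> y) \<in> N \<Longrightarrow> s = t"
  shows "finite S"
proof -
  have \<phi>X: "\<phi> ` carrier G \<subseteq> topspace X"
    using closedin_subset[OF closed] by blast
  have "finite (\<phi> ` S)"
  proof (rule countably_compact_locally_finite_imp_finite[OF cc t1])
    show "\<phi> ` S \<subseteq> topspace X"
      using S \<phi>X by blast
  next
    fix x assume x: "x \<in> topspace X"
    consider "x = z" | h where "h \<in> carrier G" "x = \<phi> h" | "x \<in> topspace X - insert z (\<phi> ` carrier G)"
      using x by blast
    then show "\<exists>T. openin X T \<and> x \<in> T \<and> finite (\<phi> ` S \<inter> T)"
    proof cases
      case 1
      show ?thesis
        using U 1 by (intro exI[of _ U]) simp
    next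
      case (2 h)
      define T where "T = {y \<in> topspace X. f y (\<phi> (inv h)) \<in> N}"
      have "\<phi> (inv h) \<in> topspace X"
        using \<phi>X 2(1) by blast
      then have "openin X T"
        unfolding T_def
        by (rule openin_continuous_map_preimage[OF continuous_map_translations(2)[OF cont] N(1)])
      moreover have "x \<in> T"
        using x 2 N(2) hom by (simp add: T_def)
      moreover have "finite (\<phi> ` S \<inter> T)"
      proof (cases "\<phi> ` S \<inter> T = {}")
        case False
        then obtain s where s: "s \<in> S" "\<phi> s \<in> T"
          by blast
        have "t = s" if "t \<in> S" "\<phi> t \<in> T" for t
          using sep[OF that(1) s(1) inv_closed[OF 2(1)]] that s
            hom[OF subsetD[OF S] inv_closed[OF 2(1)]]
          by (auto simp: T_def)
        then have "\<phi> ` S \<inter> T \<subseteq> {\<phi> s}"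
          by blast
        then show ?thesis
          by (rule finite_subset) simp
      qed simp
      ultimately show ?thesis
        by blast
    next
      case 3
      moreover have "openin X (topspace X - insert z (\<phi> ` carrier G))"
        using closed by blast
      moreover have "\<phi> ` S \<inter> (topspace X - insert z (\<phi> ` carrier G)) = {}"
        using S by blast
      ultimately show ?thesis
        by (intro exI[of _ "topspace X - insert z (\<phi> ` carrier G)"]) simp
    qed
  qed
  then show ?thesis
    by (rule finite_imageD[OF _ inj_on_subset[OF inj S]])
qed

text \<open>Continuity at \<open>(z, z)\<close> and at \<open>(z, \<one>)\<close> gives neighbourhoods with \<open>U\<^sub>0 U\<^sub>1 \<subseteq> W\<close> and
  \<open>A N \<subseteq> W\<close>, where \<open>W\<close> is separated from \<open>\<phi> \<one>\<close>, and a sequence \<open>p\<close> with \<open>p\<^sub>n, p\<^sub>m\<inverse> p\<^sub>n \<in> U\<^sub>0 \<inter> A\<close>.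
  The inverses \<open>p\<^sub>n\<inverse>\<close> then avoid \<open>U\<^sub>1\<close>, and no right translate of \<open>N\<close> contains two of them.\<close>
lemma (in group) idempotent_separated_from_group_image:
  assumes cc: "countably_compact_space X" and haus: "Hausdorff_space X"
    and cont: "continuous_map (prod_topology X X) X (\<lambda>(x, y). f x y)"
    and hom: "\<And>g h. g \<in> carrier G \<Longrightarrow> h \<in> carrier G \<Longrightarrow> f (\<phi> g) (\<phi> h) = \<phi> (g \<otimes> h)"
    and inj: "inj_on \<phi> (carrier G)" and closed: "closedin X (insert z (\<phi> ` carrier G))"
    and z: "f z z = z" "f z (\<phi> \<one>) = z" "z \<noteq> \<phi> \<one>"
  shows "\<exists>U. openin X U \<and> z \<in> U \<and> U \<inter> \<phi> ` carrier G = {}"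
proof (rule ccontr)
  assume "\<nexists>U. openin X U \<and> z \<in> U \<and> U \<inter> \<phi> ` carrier G = {}"
  then have adh: "\<And>U. openin X U \<Longrightarrow> z \<in> U \<Longrightarrow> \<exists>g\<in>carrier G. \<phi> g \<in> U"
    by blast
  have zX: "z \<in> topspace X" and eX: "\<phi> \<one> \<in> topspace X"
    using closedin_subset[OF closed] by auto
  obtain V W where VW: "openin X V" "openin X W" "\<phi> \<one> \<in> V" "z \<in> W" "disjnt V W"
    using haus[unfolded Hausdorff_space_def, rule_format, of "\<phi> \<one>" z] eX zX z(3) by blast
  obtain U0 U1 where U: "openin X U0" "openin X U1" "z \<in> U0" "z \<in> U1"
    "\<And>u v. u \<in> U0 \<Longrightarrow> v \<in> U1 \<Longrightarrow> f u v \<in> W"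
    using continuous_map_binop_nbhds[OF cont zX zX VW(2), unfolded z(1), OF VW(4)] by blast
  obtain A N where AN: "openin X A" "openin X N" "z \<in> A" "\<phi> \<one> \<in> N"
    "\<And>u v. u \<in> A \<Longrightarrow> v \<in> N \<Longrightarrow> f u v \<in> W"
    using continuous_map_binop_nbhds[OF cont zX eX VW(2), unfolded z(2), OF VW(4)] by blast
  have "openin X (U0 \<inter> A)" "z \<in> U0 \<inter> A"
    using U AN by auto
  then obtain p :: "nat \<Rightarrow> 'a" where p: "\<And>n. p n \<in> carrier G" "\<And>n. \<phi> (p n) \<in> U0 \<inter> A"
    "\<And>m n. m < n \<Longrightarrow> \<phi> (inv (p m) \<otimes> p n) \<in> U0 \<inter> A"
    using idempotent_adherent_group_image_seq[OF cont hom zX z(1) adh] by blast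
  have shift: "\<phi> (inv (p m) \<otimes> y) \<notin> V \<inter> N"
    if "m < n" "y \<in> carrier G" "\<phi> (inv (p n) \<otimes> y) \<in> V \<inter> N" for m n y
  proof
    assume in_VN: "\<phi> (inv (p m) \<otimes> y) \<in> V \<inter> N"
    have eq: "inv (p m) \<otimes> y = (inv (p m) \<otimes> p n) \<otimes> (inv (p n) \<otimes> y)"
      using p(1) that(2) by (simp add: m_assoc[symmetric]) (simp add: m_assoc)
    have "f (\<phi> (inv (p m) \<otimes> p n)) (\<phi> (inv (p n) \<otimes> y)) \<in> W"
      using AN(5) p(3)[OF that(1)] that(3) by blast
    then have "\<phi> (inv (p m) \<otimes> y) \<in> W"
      using eq hom p(1) that(2) by simp
    then show False
      using in_VN VW(5) by (auto simp: disjnt_def)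
  qed
  have sep: "m = n" if "y \<in> carrier G" "\<phi> (inv (p m) \<otimes> y) \<in> V \<inter> N" "\<phi> (inv (p n) \<otimes> y) \<in> V \<inter> N"
    for m n y
    using shift[of m n y] shift[of n m y] that by (cases m n rule: linorder_cases) auto
  have inj_inv_p: "inj (\<lambda>n. inv (p n))"
  proof (rule injI)
    fix m n assume eq: "inv (p m) = inv (p n)"
    have n: "\<phi> (inv (p n) \<otimes> p n) \<in> V \<inter> N"
      using p(1) VW(3) AN(4) by simp
    then have m: "\<phi> (inv (p m) \<otimes> p n) \<in> V \<inter> N"
      by (simp only: eq)
    show "m = n"
      using sep[OF p(1) m n] .
  qed
  have "finite (range (\<lambda>n. inv (p n)))"
  proof (rule finite_if_separated_translates[OF cc Hausdorff_imp_t1_space[OF haus] cont hom inj closed,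
        where U = U1 and N = "V \<inter> N"])
    show "range (\<lambda>n. inv (p n)) \<subseteq> carrier G"
      using p(1) by blast
    show "s = t" if prems: "s \<in> range (\<lambda>n. inv (p n))" "t \<in> range (\<lambda>n. inv (p n))" "y \<in> carrier G"
      "\<phi> (s \<otimes> y) \<in> V \<inter> N" "\<phi> (t \<otimes> y) \<in> V \<inter> N" for s t y
    proof -
      obtain m n where "s = inv (p m)" "t = inv (p n)"
        using prems(1,2) by blast
      moreover have "m = n"
        using sep[OF prems(3)] prems(4,5) calculation by simp
      ultimately show ?thesis
        by simp
    qed
    show "\<phi> ` range (\<lambda>n. inv (p n)) \<inter> U1 = {}"
    proof -
      have "\<phi> (inv (p n)) \<notin> U1" for n
      proof
        assume "\<phi> (inv (p n)) \<in> U1"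
        then have "f (\<phi> (p n)) (\<phi> (inv (p n))) \<in> W"
          using U(5) p(2) by blast
        then have "\<phi> \<one> \<in> W"
          using hom p(1) by simp
        then show False
          using VW(3,5) by (auto simp: disjnt_def)
      qed
      then show ?thesis
        by blast
    qed
  qed (use U VW AN in auto)
  then show False
    using finite_imageD[OF _ inj_inv_p] by simp
qed

lemma cell_disjoint: "x \<in> cell G i a b \<Longrightarrow> x \<in> cell G j c d \<Longrightarrow> (i, a, b) = (j, c, d)"
  by (auto simp: cell_def)

locale orthogonal_sum_semigroup =
  fixes I :: "'i set" and Lam :: "'i \<Rightarrow> 'l set" and G :: "'i \<Rightarrow> 'g monoid"
    and X :: "('i \<times> 'l \<times> 'g \<times> 'l) option topology"
  assumes groups: "\<And>i. i \<in> I \<Longrightarrow> group (G i)"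
    and topspace_eq: "topspace X = osum_carrier I Lam G"
    and haus: "Hausdorff_space X"
    and cont: "continuous_map (prod_topology X X) X (\<lambda>(x, y). osum_mult G x y)"
    and ccpt: "countably_compact_space X"
begin

lemma None_in_topspace: "None \<in> topspace X"
  by (simp add: topspace_eq osum_carrier_def)

lemma Some_in_topspace_iff:
  "Some (i, a, g, b) \<in> topspace X \<longleftrightarrow> i \<in> I \<and> a \<in> Lam i \<and> b \<in> Lam i \<and> g \<in> carrier (G i)"
  by (auto simp: topspace_eq osum_carrier_def)

lemma topspace_cases:
  assumes "x \<in> topspace X"
  obtains "x = None" | i a b where "i \<in> I" "a \<in> Lam i" "b \<in> Lam i" "x \<in> cell G i a b"
  using assms by (auto simp: topspace_eq osum_carrier_def cell_def)

lemma cell_subset_topspace: "i \<in> I \<Longrightarrow> a \<in> Lam i \<Longrightarrow> b \<in> Lam i \<Longrightarrow> cell G i a b \<subseteq> topspace X"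
  by (auto simp: cell_def Some_in_topspace_iff)

lemma openin_cell:
  assumes iab: "i \<in> I" "a \<in> Lam i" "b \<in> Lam i"
  shows "openin X (cell G i a b)"
proof -
  define e where "e c = Some (i, c, \<one>\<^bsub>G i\<^esub>, c)" for c :: 'l
  define h where "h y = osum_mult G (osum_mult G (e a) y) (e b)" for y
  have "e a \<in> topspace X" "e b \<in> topspace X"
    using iab groups[OF iab(1)] by (simp_all add: e_def Some_in_topspace_iff group.is_monoid)
  then have h: "continuous_map X X h"
    using continuous_map_compose[OF continuous_map_translations(1)[OF cont]
        continuous_map_translations(2)[OF cont]]
    unfolding h_def o_def by blast
  have "openin X (topspace X - {None})"
    using Hausdorff_imp_t1_space[OF haus] None_in_topspace
    by (simp add: openin_diff t1_space_closedin_singleton)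
  then have "openin X {y \<in> topspace X. h y \<in> topspace X - {None}}"
    by (rule openin_continuous_map_preimage[OF h])
  moreover have "{y \<in> topspace X. h y \<in> topspace X - {None}} = cell G i a b"
  proof (intro equalityI subsetI)
    fix y assume "y \<in> {y \<in> topspace X. h y \<in> topspace X - {None}}"
    then have "y \<in> topspace X" "h y \<noteq> None"
      by auto
    then show "y \<in> cell G i a b"
      by (cases rule: topspace_cases) (auto simp: h_def e_def cell_def split: if_splits)
  next
    fix y assume y: "y \<in> cell G i a b"
    then have "y \<in> topspace X"
      using cell_subset_topspace[OF iab] by blast
    moreover have "h y \<noteq> None"
      using y by (auto simp: h_def e_def cell_def)
    moreover have "h y \<in> topspace X"
      using continuous_map_funspace[OF h] calculation(1) by blast
    ultimately show "y \<in> {y \<in> topspace X. h y \<in> topspace X - {None}}"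
      by blast
  qed
  ultimately show ?thesis
    by simp
qed

lemma closedin_insert_None_cell:
  assumes iab: "i \<in> I" "a \<in> Lam i" "b \<in> Lam i"
  shows "closedin X (insert None (cell G i a b))"
proof -
  let ?others = "{cell G j c d | j c d. j \<in> I \<and> c \<in> Lam j \<and> d \<in> Lam j \<and> (j, c, d) \<noteq> (i, a, b)}"
  have "topspace X - insert None (cell G i a b) = \<Union>?others"
  proof (intro equalityI subsetI)
    fix x assume x: "x \<in> topspace X - insert None (cell G i a b)"
    then have "x \<in> topspace X"
      by blast
    then show "x \<in> \<Union>?others"
      by (cases rule: topspace_cases) (use x in blast)+
  next
    fix x assume "x \<in> \<Union>?others"
    then obtain j c d where jcd: "j \<in> I" "c \<in> Lam j" "d \<in> Lam j" "(j, c, d) \<noteq> (i, a, b)"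
      and x: "x \<in> cell G j c d"
      by blast
    have "x \<notin> cell G i a b"
      using cell_disjoint[OF x] jcd(4) by metis
    then show "x \<in> topspace X - insert None (cell G i a b)"
      using x cell_subset_topspace[OF jcd(1-3)] by (auto simp: cell_def)
  qed
  moreover have "openin X (\<Union>?others)"
    by (rule openin_Union) (auto intro: openin_cell)
  ultimately show ?thesis
    using cell_subset_topspace[OF iab] None_in_topspace by (simp add: closedin_def)
qed

lemma None_separated_from_diagonal_cell:
  assumes ia: "i \<in> I" "a \<in> Lam i"
  shows "\<exists>U. openin X U \<and> None \<in> U \<and> U \<inter> cell G i a a = {}"
proof -
  interpret group "G i"
    by (rule groups[OF ia(1)])
  have cell_eq: "cell G i a a = (\<lambda>g. Some (i, a, g, a)) ` carrier (G i)"
    by (auto simp: cell_def)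
  show ?thesis
    unfolding cell_eq
  proof (rule idempotent_separated_from_group_image[OF ccpt haus cont])
    show "closedin X (insert None ((\<lambda>g. Some (i, a, g, a)) ` carrier (G i)))"
      using closedin_insert_None_cell[OF ia ia(2)] by (simp add: cell_eq)
  qed (simp_all add: inj_on_def)
qed

text \<open>Right translation by \<open>(b, \<one>, a)\<close> maps \<open>(G\<^sub>i)\<^sub>a\<^sub>,\<^sub>b\<close> into \<open>(G\<^sub>i)\<^sub>a\<^sub>,\<^sub>a\<close> and fixes \<open>0\<close>.\<close>
lemma None_separated_from_cell:
  assumes iab: "i \<in> I" "a \<in> Lam i" "b \<in> Lam i"
  shows "\<exists>U. openin X U \<and> None \<in> U \<and> U \<inter> cell G i a b = {}"
proof -
  interpret group "G i"
    by (rule groups[OF iab(1)])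
  define t where "t = Some (i, b, \<one>\<^bsub>G i\<^esub>, a)"
  have t: "t \<in> topspace X"
    using iab by (simp add: t_def Some_in_topspace_iff)
  obtain U where U: "openin X U" "None \<in> U" "U \<inter> cell G i a a = {}"
    using None_separated_from_diagonal_cell[OF iab(1,2)] by blast
  let ?U = "{y \<in> topspace X. osum_mult G y t \<in> U}"
  have "openin X ?U"
    by (rule openin_continuous_map_preimage[OF continuous_map_translations(2)[OF cont t] U(1)])
  moreover have "None \<in> ?U"
    using None_in_topspace U(2) by simp
  moreover have "osum_mult G y t \<in> cell G i a a" if "y \<in> cell G i a b" for y
    using that by (auto simp: cell_def t_def)
  then have "?U \<inter> cell G i a b = {}"
    using U(3) by blast
  ultimately show ?thesis
    by (intro exI[of _ ?U]) simp
qed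

lemma closedin_cell:
  assumes iab: "i \<in> I" "a \<in> Lam i" "b \<in> Lam i"
  shows "closedin X (cell G i a b)"
proof -
  obtain U where U: "openin X U" "None \<in> U" "U \<inter> cell G i a b = {}"
    using None_separated_from_cell[OF iab] by blast
  then have "cell G i a b = insert None (cell G i a b) - U"
    by blast
  then show ?thesis
    using closedin_diff[OF closedin_insert_None_cell[OF iab] U(1)] by simp
qed

text \<open>Picking one point outside \<open>U\<close> in each such cell gives a locally finite set: cells are open
  and pairwise disjoint, and \<open>U\<close> is a neighbourhood of \<open>0\<close> missing all the chosen points.\<close>
lemma finite_cells_not_in_nbhd_None:
  assumes U: "openin X U" "None \<in> U"
  shows "finite {(i, a, b). i \<in> I \<and> a \<in> Lam i \<and> b \<in> Lam i \<and> \<not> cell G i a b \<subseteq> U}"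
proof -
  define F where "F = {(i, a, b). i \<in> I \<and> a \<in> Lam i \<and> b \<in> Lam i \<and> \<not> cell G i a b \<subseteq> U}"
  define C :: "'i \<times> 'l \<times> 'l \<Rightarrow> _" where "C = (\<lambda>(i, a, b). cell G i a b)"
  have "\<forall>t\<in>F. \<exists>x. x \<in> C t - U"
    by (auto simp: F_def C_def)
  then obtain q where q: "\<And>t. t \<in> F \<Longrightarrow> q t \<in> C t - U"
    by (metis bchoice)
  have q_cell: "t = (j, c, d)" if "t \<in> F" "q t \<in> cell G j c d" for t j c d
  proof -
    obtain i a b where t: "t = (i, a, b)"
      by (cases t)
    then have "q t \<in> cell G i a b"
      using q[OF that(1)] by (simp add: C_def)
    then show ?thesis
      using cell_disjoint[OF _ that(2)] t by simp
  qed
  have q_top: "q t \<in> topspace X" if tF: "t \<in> F" for t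
  proof -
    obtain i a b where t: "t = (i, a, b)" "i \<in> I" "a \<in> Lam i" "b \<in> Lam i"
      using tF by (auto simp: F_def)
    then show ?thesis
      using q[OF tF] cell_subset_topspace[OF t(2-4)] by (auto simp: C_def)
  qed
  have inj: "inj_on q F"
  proof (rule inj_onI)
    fix s t assume s: "s \<in> F" and t: "t \<in> F" and "q s = q t"
    obtain j c d where "t = (j, c, d)"
      by (cases t)
    then have "q s \<in> cell G j c d"
      using q[OF t] \<open>q s = q t\<close> by (simp add: C_def)
    then show "s = t"
      using q_cell[OF s] \<open>t = (j, c, d)\<close> by simp
  qed
  have "finite (q ` F)"
  proof (rule countably_compact_locally_finite_imp_finite[OF ccpt Hausdorff_imp_t1_space[OF haus]])
    show "q ` F \<subseteq> topspace X"
      using q_top by (rule image_subsetI)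
  next
    fix x assume "x \<in> topspace X"
    then show "\<exists>T. openin X T \<and> x \<in> T \<and> finite (q ` F \<inter> T)"
    proof (cases rule: topspace_cases)
      case 1
      have "q t \<notin> U" if "t \<in> F" for t
        using q[OF that] by blast
      then have "q ` F \<inter> U = {}"
        by blast
      then show ?thesis
        using U 1 by (intro exI[of _ U]) simp
    next
      case (2 j c d)
      have "q ` F \<inter> cell G j c d \<subseteq> {q (j, c, d)}"
      proof
        fix y assume "y \<in> q ` F \<inter> cell G j c d"
        then obtain t where "t \<in> F" "y = q t" "q t \<in> cell G j c d"
          by blast
        then show "y \<in> {q (j, c, d)}"
          using q_cell by simp
      qed
      then have "finite (q ` F \<inter> cell G j c d)"
        by (rule finite_subset) simp
      then show ?thesis
        using openin_cell[OF 2(1-3)] 2(4) by (intro exI[of _ "cell G j c d"]) simp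
    qed
  qed
  then show ?thesis
    unfolding F_def[symmetric] by (rule finite_imageD[OF _ inj])
qed


lemma topspace_diff_cells_nbhd_None:
  assumes F: "finite F" "F \<subseteq> {(i, a, b). i \<in> I \<and> a \<in> Lam i \<and> b \<in> Lam i}"
  shows "openin X (topspace X - (\<Union>(i, a, b)\<in>F. cell G i a b))"
    and "None \<in> topspace X - (\<Union>(i, a, b)\<in>F. cell G i a b)"
proof -
  have "closedin X (\<Union>(i, a, b)\<in>F. cell G i a b)"
    using F by (intro closedin_Union) (auto intro: closedin_cell)
  then show "openin X (topspace X - (\<Union>(i, a, b)\<in>F. cell G i a b))"
    by blast
  show "None \<in> topspace X - (\<Union>(i, a, b)\<in>F. cell G i a b)"
    using None_in_topspace by (auto simp: cell_def)
qed

lemma nbhd_None_contains_cofinitely_many_cells: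
  assumes U: "openin X U" "None \<in> U"
  obtains F where "finite F" "F \<subseteq> {(i, a, b). i \<in> I \<and> a \<in> Lam i \<and> b \<in> Lam i}"
    "topspace X - (\<Union>(i, a, b)\<in>F. cell G i a b) \<subseteq> U"
proof
  define F where "F = {(i, a, b). i \<in> I \<and> a \<in> Lam i \<and> b \<in> Lam i \<and> \<not> cell G i a b \<subseteq> U}"
  show "finite F"
    unfolding F_def using U by (rule finite_cells_not_in_nbhd_None)
  show "F \<subseteq> {(i, a, b). i \<in> I \<and> a \<in> Lam i \<and> b \<in> Lam i}"
    by (auto simp: F_def)
  show "topspace X - (\<Union>(i, a, b)\<in>F. cell G i a b) \<subseteq> U"
  proof
    fix x assume x: "x \<in> topspace X - (\<Union>(i, a, b)\<in>F. cell G i a b)"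
    then have "x \<in> topspace X"
      by blast
    then show "x \<in> U"
    proof (cases rule: topspace_cases)
      case (2 j c d)
      have "(j, c, d) \<notin> F"
        using x 2(4) by blast
      then show ?thesis
        using 2 by (auto simp: F_def)
    qed (use U in simp)
  qed
qed

end

theorem theorem3p10:
  fixes I :: "'i set" and Lam :: "'i \<Rightarrow> 'l set" and G :: "'i \<Rightarrow> 'g monoid"
    and X :: "('i \<times> 'l \<times> 'g \<times> 'l) option topology"
  assumes groups: "\<And>i. i \<in> I \<Longrightarrow> group (G i)"
    and Lam_ne: "\<And>i. i \<in> I \<Longrightarrow> Lam i \<noteq> {}"
    and carrier: "topspace X = osum_carrier I Lam G"
    and haus: "Hausdorff_space X"
    and cont: "continuous_map (prod_topology X X) X (\<lambda>(x, y). osum_mult G x y)"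
    and ccpt: "countably_compact_space X"
  shows "base_at X None
           {topspace X - (\<Union>(i, a, b)\<in>F. cell G i a b) | F.
              finite F \<and> F \<subseteq> {(i, a, b). i \<in> I \<and> a \<in> Lam i \<and> b \<in> Lam i}}"
proof -
  interpret orthogonal_sum_semigroup I Lam G X
    by (rule orthogonal_sum_semigroup.intro[OF groups carrier haus cont ccpt])
  show ?thesis
    unfolding base_at_def
  proof (rule conjI; intro allI impI ballI)
    fix B assume "B \<in> {topspace X - (\<Union>(i, a, b)\<in>F. cell G i a b) | F.
      finite F \<and> F \<subseteq> {(i, a, b). i \<in> I \<and> a \<in> Lam i \<and> b \<in> Lam i}}"
    then show "openin X B \<and> None \<in> B"
      using topspace_diff_cells_nbhd_None by blast
  next
    fix U assume "openin X U \<and> None \<in> U"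
    then obtain F where "finite F" "F \<subseteq> {(i, a, b). i \<in> I \<and> a \<in> Lam i \<and> b \<in> Lam i}"
      "topspace X - (\<Union>(i, a, b)\<in>F. cell G i a b) \<subseteq> U"
      using nbhd_None_contains_cofinitely_many_cells by blast
    then show "\<exists>B\<in>{topspace X - (\<Union>(i, a, b)\<in>F. cell G i a b) | F.
      finite F \<and> F \<subseteq> {(i, a, b). i \<in> I \<and> a \<in> Lam i \<and> b \<in> Lam i}}. B \<subseteq> U"
      by blast
  qed
qed

end
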